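(* Let $W(y|x_1,x_2)$ be a discrete memoryless multiple access channel with finite input alphabets $\mathcal{X}_1,\mathcal{X}_2$ and finite output alphabet $\mathcal{Y}$, and let $\delta,\eta>0$. Let $(x_1^n,x_2^n)$ and $(\tilde{x}_1^n,\tilde{x}_2^n)$ be pairs of words with Hamming distances $d_H(x_1^n,\tilde{x}_1^n)\ge\delta n$ and $d_H(x_2^n,\tilde{x}_2^n)\ge\delta n$, and suppose that for all $x_1\in\mathcal{X}_1,x_2\in\mathcal{X}_2$ and every probability distribution $\mathcal{P}$ on $\mathcal{X}_1\times\mathcal{X}_2$ with $\mathcal{P}(x_1,x_2)=0$, \[ \Big\|W_{x_1,x_2}-\sum_{\tilde{x}_1,\tilde{x}_2}\mathcal{P}(\tilde{x}_1,\tilde{x}_2)W_{\tilde{x}_1,\tilde{x}_2}\Big\|\ge\eta . \] Then, with $\epsilon=\frac{\delta^4\eta^2}{2|\mathcal{X}_1|^2|\mathcal{X}_2|^2|\mathcal{Y}|}$, \[ W^n_{\tilde{x}_1^n,\tilde{x}_2^n}\big(\mathcal{T}^n_{W,\epsilon}(x_1^n,x_2^n)\big)\le 2\exp\Big(-\frac{n\epsilon^4}{2}\Big). \]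
   Context: $W_{x_1,x_2}$ denotes the output distribution $W(\cdot|x_1,x_2)$ on $\mathcal{Y}$; $\|\cdot\|$ is the statistical distance $\|P-Q\|=\frac12\sum_y|P(y)-Q(y)|$. For words $x_1^n,x_2^n$, $W^n_{x_1^n,x_2^n}=W_{x_{1,1}x_{2,1}}\otimes\cdots\otimes W_{x_{1,n}x_{2,n}}$ is the product output distribution on $\mathcal{Y}^n$. $\mathcal{T}^n_{W,\epsilon}(x_1^n,x_2^n)\subseteq\mathcal{Y}^n$ is the set of output sequences that are conditionally $\epsilon$-typical given $(x_1^n,x_2^n)$ with respect to $W$ (jointly typical with $(x_1^n,x_2^n)$), i.e. the sequences $y^n$ whose joint empirical counts with $(x_1^n,x_2^n)$ deviate from those expected under $W$ by at most $\epsilon n$. *)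

theory Defs
  imports Complex_Main
begin

text \<open>A DM-MAC with finite input alphabets 'a, 'b and finite output alphabet 'c is
  given by W x1 x2 y = W(y|x1,x2); each W x1 x2 is a probability distribution.\<close>
definition is_mac :: "('a::finite \<Rightarrow> 'b::finite \<Rightarrow> 'c::finite \<Rightarrow> real) \<Rightarrow> bool" where
  "is_mac W \<longleftrightarrow> (\<forall>a b y. 0 \<le> W a b y) \<and> (\<forall>a b. (\<Sum>y\<in>UNIV. W a b y) = 1)"

definition stat_dist :: "('c::finite \<Rightarrow> real) \<Rightarrow> ('c \<Rightarrow> real) \<Rightarrow> real" where
  "stat_dist P Q = (1/2) * (\<Sum>y\<in>UNIV. \<bar>P y - Q y\<bar>)"

definition is_distr :: "('a::finite \<Rightarrow> real) \<Rightarrow> bool" where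
  "is_distr P \<longleftrightarrow> (\<forall>x. 0 \<le> P x) \<and> (\<Sum>x\<in>UNIV. P x) = 1"

definition hamming :: "'a list \<Rightarrow> 'a list \<Rightarrow> nat" where
  "hamming xs ys = card {i. i < length xs \<and> xs ! i \<noteq> ys ! i}"

definition prod_out :: "('a \<Rightarrow> 'b \<Rightarrow> 'c \<Rightarrow> real) \<Rightarrow> 'a list \<Rightarrow> 'b list \<Rightarrow> 'c list \<Rightarrow> real" where
  "prod_out W xs1 xs2 ys = (\<Prod>i<length ys. W (xs1 ! i) (xs2 ! i) (ys ! i))"

definition prob_out :: "nat \<Rightarrow> ('a \<Rightarrow> 'b \<Rightarrow> 'c \<Rightarrow> real) \<Rightarrow> 'a list \<Rightarrow> 'b list \<Rightarrow> 'c list set \<Rightarrow> real" where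
  "prob_out n W xs1 xs2 T = (\<Sum>ys\<in>T \<inter> {ys. length ys = n}. prod_out W xs1 xs2 ys)"

definition cond_typical ::
  "nat \<Rightarrow> ('a::finite \<Rightarrow> 'b::finite \<Rightarrow> 'c::finite \<Rightarrow> real) \<Rightarrow> real \<Rightarrow> 'a list \<Rightarrow> 'b list \<Rightarrow> 'c list set" where
  "cond_typical n W eps xs1 xs2 = {ys. length ys = n \<and>
     (\<forall>a b c. \<bar>real (card {i. i < n \<and> xs1 ! i = a \<and> xs2 ! i = b \<and> ys ! i = c})
               - real (card {i. i < n \<and> xs1 ! i = a \<and> xs2 ! i = b}) * W a b c\<bar> \<le> eps * real n)}"

end

theory Submission
  imports Defs
begin

text \<open>
  Pigeonhole over the at least \<open>\<delta> n\<close> positions where \<open>x\<^sub>1\<close> and \<open>x\<^sub>1'\<close> differ gives a pair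
  \<open>(a, b)\<close> carried by \<open>(x\<^sub>1, x\<^sub>2)\<close> at \<open>M \<ge> \<delta> n / (|X\<^sub>1| |X\<^sub>2|)\<close> positions where
  \<open>(x\<^sub>1', x\<^sub>2')\<close> carries a different pair. The empirical distribution \<open>P\<close> of those
  different pairs vanishes at \<open>(a, b)\<close>, so the separation hypothesis and a second pigeonhole
  give an output \<open>c\<close> with \<open>|W(c|a,b) - \<Sum> P W(c|\<cdot>)| \<ge> 2\<eta> / |Y|\<close>. Hence, on the positions
  \<open>I\<close> where \<open>(x\<^sub>1, x\<^sub>2) = (a, b)\<close>, the expected number of \<open>c\<close>'s under the input
  \<open>(x\<^sub>1', x\<^sub>2')\<close> is at least \<open>4\<epsilon>n\<close> away from the count \<open>|I| W(c|a,b)\<close> that typicality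
  prescribes. Every typical output thus deviates from its mean by at least \<open>2\<epsilon>n\<close>, and a
  Chernoff bound for product distributions bounds the probability of this by
  \<open>2 exp(-n\<epsilon>\<^sup>2) \<le> 2 exp(-n\<epsilon>\<^sup>4/2)\<close>.
\<close>

section \<open>A Chernoff bound for product distributions on words\<close>

lemma exp_le_one_plus_square:
  fixes x :: real
  assumes "\<bar>x\<bar> \<le> 1"
  shows "exp x \<le> 1 + x + x\<^sup>2"
proof (cases "x \<ge> 0")
  case True
  then show ?thesis using exp_bound[of x] assms by simp
next
  case False
  have "exp x * (1 - x) \<le> exp x * exp (- x)"
    using exp_ge_add_one_self[of "- x"] by (intro mult_left_mono) auto
  also have "\<dots> = 1" by (simp add: exp_minus_inverse)
  also have "1 \<le> (1 + x + x\<^sup>2) * (1 - x)"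
  proof -
    have "(1 + x + x\<^sup>2) * (1 - x) = 1 - x ^ 3"
      by (simp add: algebra_simps power2_eq_square power3_eq_cube)
    moreover have "x ^ 3 \<le> 0" using False by (simp add: power3_eq_cube mult_nonneg_nonpos)
    ultimately show ?thesis by simp
  qed
  finally show ?thesis using False by (simp add: mult_le_cancel_right)
qed

lemma exp_neg_square_le_exp_neg_pow4:
  fixes x e :: real
  assumes "0 \<le> x" "0 \<le> e" "e \<le> 1"
  shows "exp (- x * e\<^sup>2) \<le> exp (- x * e ^ 4 / 2)"
proof -
  have "e ^ 4 \<le> e\<^sup>2" using assms by (intro power_decreasing) auto
  then have "e ^ 4 / 2 \<le> e\<^sup>2" using zero_le_power2[of e] by linarith
  then have "x * (e ^ 4 / 2) \<le> x * e\<^sup>2" using assms by (intro mult_left_mono) auto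
  then show ?thesis by simp
qed

lemma sum_lists_length_prod:
  fixes g :: "nat \<Rightarrow> 'c::finite \<Rightarrow> real"
  shows "(\<Sum>ys | length ys = n. \<Prod>i<n. g i (ys ! i)) = (\<Prod>i<n. \<Sum>y\<in>UNIV. g i y)"
proof (induction n)
  case 0
  then show ?case by simp
next
  case (Suc n)
  have split: "{ys :: 'c list. length ys = Suc n} = (\<lambda>(ys, y). ys @ [y]) ` ({ys. length ys = n} \<times> UNIV)"
  proof (intro set_eqI iffI)
    fix zs :: "'c list"
    assume "zs \<in> {ys. length ys = Suc n}"
    then have "zs = butlast zs @ [last zs]" "length (butlast zs) = n"
      by (auto intro: append_butlast_last_id[symmetric])
    then show "zs \<in> (\<lambda>(ys, y). ys @ [y]) ` ({ys. length ys = n} \<times> UNIV)"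
      by (metis (mono_tags, lifting) SigmaI UNIV_I case_prod_conv image_eqI mem_Collect_eq)
  qed auto
  have inj: "inj_on (\<lambda>(ys, y). ys @ [y]) ({ys :: 'c list. length ys = n} \<times> UNIV)"
    by (auto simp: inj_on_def)
  have snoc: "(\<Prod>i<Suc (length ys). g i ((ys @ [y]) ! i)) = (\<Prod>i<length ys. g i (ys ! i)) * g (length ys) y"
    for ys y
  proof -
    have "(\<Prod>i<length ys. g i ((ys @ [y]) ! i)) = (\<Prod>i<length ys. g i (ys ! i))"
      by (intro prod.cong) (auto simp: nth_append)
    then show ?thesis by simp
  qed
  have "(\<Sum>ys | length ys = Suc n. \<Prod>i<Suc n. g i (ys ! i))
      = (\<Sum>(ys, y) \<in> {ys. length ys = n} \<times> UNIV. (\<Prod>i<n. g i (ys ! i)) * g n y)"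
    unfolding split
    by (subst sum.reindex[OF inj]) (auto simp: snoc simp del: prod.lessThan_Suc intro!: sum.cong)
  also have "\<dots> = (\<Sum>ys | length ys = n. \<Prod>i<n. g i (ys ! i)) * (\<Sum>y\<in>UNIV. g n y)"
    by (simp add: sum_product sum.cartesian_product)
  finally show ?case using Suc by simp
qed

lemma is_distr_le_one:
  assumes "is_distr P"
  shows "P x \<le> 1"
proof -
  have "P x \<le> (\<Sum>y\<in>UNIV. P y)"
    using assms by (intro member_le_sum) (auto simp: is_distr_def)
  then show ?thesis using assms by (simp add: is_distr_def)
qed

lemma exp_moment_le:
  fixes Q X :: "'c::finite \<Rightarrow> real"
  assumes Q: "is_distr Q" and X: "\<And>y. \<bar>X y\<bar> \<le> 1" and centred: "(\<Sum>y\<in>UNIV. Q y * X y) = 0"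
    and l: "0 \<le> l" "l \<le> 1"
  shows "(\<Sum>y\<in>UNIV. Q y * exp (l * X y)) \<le> exp (l\<^sup>2)"
proof -
  have "exp (l * X y) \<le> 1 + l * X y + l\<^sup>2" for y
  proof -
    have "\<bar>l * X y\<bar> \<le> 1" using X[of y] l by (simp add: abs_mult mult_le_one)
    moreover have "(l * X y)\<^sup>2 \<le> l\<^sup>2"
      using X[of y] by (simp add: power_mult_distrib abs_square_le_1 mult_left_le)
    ultimately show ?thesis using exp_le_one_plus_square by fastforce
  qed
  then have "(\<Sum>y\<in>UNIV. Q y * exp (l * X y)) \<le> (\<Sum>y\<in>UNIV. Q y * (1 + l * X y + l\<^sup>2))"
    using Q by (intro sum_mono mult_left_mono) (auto simp: is_distr_def)
  also have "\<dots> = (\<Sum>y\<in>UNIV. Q y) * (1 + l\<^sup>2) + l * (\<Sum>y\<in>UNIV. Q y * X y)"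
    by (simp add: algebra_simps sum.distrib sum_distrib_left sum_distrib_right)
  also have "\<dots> = 1 + l\<^sup>2" using Q centred by (simp add: is_distr_def)
  also have "\<dots> \<le> exp (l\<^sup>2)" using exp_ge_add_one_self[of "l\<^sup>2"] by simp
  finally show ?thesis .
qed

lemma chernoff_bound_lists:
  fixes Q X :: "nat \<Rightarrow> 'c::finite \<Rightarrow> real"
  assumes Q: "\<And>i. is_distr (Q i)" and X: "\<And>i y. \<bar>X i y\<bar> \<le> 1"
    and centred: "\<And>i. (\<Sum>y\<in>UNIV. Q i y * X i y) = 0" and l: "0 \<le> l" "l \<le> 1"
  shows "(\<Sum>ys | length ys = n \<and> t \<le> (\<Sum>i<n. X i (ys ! i)). \<Prod>i<n. Q i (ys ! i))
           \<le> exp (real n * l\<^sup>2 - l * t)"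
proof -
  let ?p = "\<lambda>ys. \<Prod>i<n. Q i (ys ! i)"
  let ?e = "\<lambda>ys. exp (l * ((\<Sum>i<n. X i (ys ! i)) - t))"
  have p: "0 \<le> ?p ys" for ys using Q by (intro prod_nonneg) (auto simp: is_distr_def)
  have "(\<Sum>ys | length ys = n \<and> t \<le> (\<Sum>i<n. X i (ys ! i)). ?p ys)
      \<le> (\<Sum>ys | length ys = n \<and> t \<le> (\<Sum>i<n. X i (ys ! i)). ?p ys * ?e ys)"
  proof (intro sum_mono)
    fix ys
    assume "ys \<in> {ys. length ys = n \<and> t \<le> (\<Sum>i<n. X i (ys ! i))}"
    then have "1 \<le> ?e ys" using l by simp
    then show "?p ys \<le> ?p ys * ?e ys" using mult_left_mono[OF _ p[of ys]] by fastforce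
  qed
  also have "\<dots> \<le> (\<Sum>ys | length ys = n. ?p ys * ?e ys)"
    using p by (intro sum_mono2 finite_list_length) auto
  also have "\<dots> = exp (- l * t) * (\<Sum>ys | length ys = n. \<Prod>i<n. Q i (ys ! i) * exp (l * X i (ys ! i)))"
  proof -
    have "?p ys * ?e ys = exp (- l * t) * (\<Prod>i<n. Q i (ys ! i) * exp (l * X i (ys ! i)))" for ys
      by (simp add: prod.distrib exp_sum sum_distrib_left right_diff_distrib exp_diff exp_minus
          field_simps)
    then show ?thesis by (simp add: sum_distrib_left)
  qed
  also have "\<dots> = exp (- l * t) * (\<Prod>i<n. \<Sum>y\<in>UNIV. Q i y * exp (l * X i y))"
    using sum_lists_length_prod[of "\<lambda>i y. Q i y * exp (l * X i y)"] by simp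
  also have "\<dots> \<le> exp (- l * t) * (\<Prod>i<n. exp (l\<^sup>2))"
    using Q X centred l
    by (intro mult_left_mono prod_mono conjI exp_moment_le sum_nonneg mult_nonneg_nonneg)
      (auto simp: is_distr_def)
  also have "\<dots> = exp (real n * l\<^sup>2 - l * t)"
    by (simp add: exp_of_nat_mult[symmetric] exp_add[symmetric])
  finally show ?thesis .
qed

lemma count_tail_le_exp:
  fixes Q :: "nat \<Rightarrow> 'c::finite \<Rightarrow> real"
  assumes Q: "\<And>i. is_distr (Q i)" and I: "I \<subseteq> {..<n}" and \<sigma>: "\<bar>\<sigma>\<bar> \<le> 1"
    and r: "0 \<le> r" "r \<le> 2"
  shows "(\<Sum>ys | length ys = n \<and> r * n \<le> \<sigma> * ((\<Sum>i\<in>I. Q i c) - card {i\<in>I. ys ! i = c}).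
            \<Prod>i<n. Q i (ys ! i))
         \<le> exp (- real n * r\<^sup>2 / 4)"
proof -
  define X where "X i y = (if i \<in> I then \<sigma> * (Q i c - of_bool (y = c)) else 0)" for i y
  have X: "\<bar>X i y\<bar> \<le> 1" for i y
    using \<sigma> is_distr_le_one[OF Q, of i c] Q[of i]
    by (auto simp: X_def abs_mult is_distr_def intro!: mult_le_one)
  have centred: "(\<Sum>y\<in>UNIV. Q i y * X i y) = 0" for i
  proof (cases "i \<in> I")
    case True
    have "(\<Sum>y\<in>UNIV. Q i y * of_bool (y = c)) = Q i c"
      by (simp add: of_bool_def if_distrib cong: if_cong)
    moreover have "(\<Sum>y\<in>UNIV. Q i y * X i y)
        = \<sigma> * (Q i c * (\<Sum>y\<in>UNIV. Q i y) - (\<Sum>y\<in>UNIV. Q i y * of_bool (y = c)))"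
      using True by (simp add: X_def algebra_simps sum_subtractf flip: sum_distrib_left sum_distrib_right)
    ultimately show ?thesis using Q[of i] by (simp add: is_distr_def)
  qed (simp add: X_def)
  have sum_X: "(\<Sum>i<n. X i (ys ! i)) = \<sigma> * ((\<Sum>i\<in>I. Q i c) - card {i\<in>I. ys ! i = c})" for ys
  proof -
    have "(\<Sum>i<n. X i (ys ! i)) = (\<Sum>i\<in>I. \<sigma> * (Q i c - of_bool (ys ! i = c)))"
      unfolding X_def using I by (intro sum.mono_neutral_cong_right) auto
    also have "\<dots> = \<sigma> * ((\<Sum>i\<in>I. Q i c) - card {i\<in>I. ys ! i = c})"
      using finite_subset[OF I]
      by (simp add: sum_subtractf of_bool_def sum.If_cases Int_def flip: sum_distrib_left)
    finally show ?thesis .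
  qed
  have "(\<Sum>ys | length ys = n \<and> r * n \<le> (\<Sum>i<n. X i (ys ! i)). \<Prod>i<n. Q i (ys ! i))
      \<le> exp (real n * (r / 2)\<^sup>2 - r / 2 * (r * n))"
    using X centred r by (intro chernoff_bound_lists Q) auto
  moreover have "real n * (r / 2)\<^sup>2 - r / 2 * (r * n) = - real n * r\<^sup>2 / 4"
    by (simp add: power2_eq_square field_simps)
  ultimately show ?thesis by (simp add: sum_X)
qed

lemma count_deviation_le_exp:
  fixes Q :: "nat \<Rightarrow> 'c::finite \<Rightarrow> real"
  assumes Q: "\<And>i. is_distr (Q i)" and I: "I \<subseteq> {..<n}" and r: "0 \<le> r" "r \<le> 2"
  shows "(\<Sum>ys | length ys = n \<and> r * n \<le> \<bar>(\<Sum>i\<in>I. Q i c) - card {i\<in>I. ys ! i = c}\<bar>.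
            \<Prod>i<n. Q i (ys ! i))
         \<le> 2 * exp (- real n * r\<^sup>2 / 4)"
proof -
  let ?p = "\<lambda>ys. \<Prod>i<n. Q i (ys ! i)"
  let ?D = "\<lambda>\<sigma>. {ys. length ys = n \<and> r * n \<le> \<sigma> * ((\<Sum>i\<in>I. Q i c) - card {i\<in>I. ys ! i = c})}"
  have p: "0 \<le> ?p ys" for ys using Q by (intro prod_nonneg) (auto simp: is_distr_def)
  have fin: "finite (?D \<sigma>)" for \<sigma> by (rule finite_subset[OF _ finite_list_length[of n]]) auto
  have "(\<Sum>ys | length ys = n \<and> r * n \<le> \<bar>(\<Sum>i\<in>I. Q i c) - card {i\<in>I. ys ! i = c}\<bar>. ?p ys)
      \<le> sum ?p (?D 1 \<union> ?D (-1))"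
    using p by (intro sum_mono2 finite_UnI fin) (auto simp: abs_if split: if_splits)
  also have "\<dots> \<le> sum ?p (?D 1) + sum ?p (?D (-1))"
  proof -
    have "0 \<le> sum ?p (?D 1 \<inter> ?D (-1))" using p by (intro sum_nonneg) auto
    then show ?thesis using sum.union_inter[OF fin fin, of ?p 1 "-1"] by linarith
  qed
  also have "\<dots> \<le> exp (- real n * r\<^sup>2 / 4) + exp (- real n * r\<^sup>2 / 4)"
    by (intro add_mono count_tail_le_exp Q I r) auto
  finally show ?thesis by simp
qed

section \<open>Output probabilities of typical sets\<close>

lemma prob_out_eq_sum:
  "prob_out n W x1 x2 T = (\<Sum>ys | ys \<in> T \<and> length ys = n. \<Prod>i<n. W (x1 ! i) (x2 ! i) (ys ! i))"
  unfolding prob_out_def prod_out_def by (intro sum.cong) auto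

lemma is_distr_mac:
  assumes "is_mac W"
  shows "is_distr (W a b)"
  using assms by (simp add: is_mac_def is_distr_def)

lemma prob_out_le_one:
  fixes W :: "'a::finite \<Rightarrow> 'b::finite \<Rightarrow> 'c::finite \<Rightarrow> real"
  assumes W: "is_mac W"
  shows "prob_out n W x1 x2 T \<le> 1"
proof -
  have "prob_out n W x1 x2 T \<le> (\<Sum>ys | length ys = n. \<Prod>i<n. W (x1 ! i) (x2 ! i) (ys ! i))"
    unfolding prob_out_eq_sum using W
    by (intro sum_mono2 finite_list_length prod_nonneg) (auto simp: is_mac_def)
  also have "\<dots> = 1"
    using W sum_lists_length_prod[of "\<lambda>i. W (x1 ! i) (x2 ! i)" n] by (simp add: is_mac_def)
  finally show ?thesis .
qed

definition pair_positions :: "nat \<Rightarrow> 'a list \<Rightarrow> 'b list \<Rightarrow> 'a \<Rightarrow> 'b \<Rightarrow> nat set" where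
  "pair_positions n x1 x2 a b = {i. i < n \<and> x1 ! i = a \<and> x2 ! i = b}"

text \<open>The subtracted term is the number of occurrences of \<open>(a, b, c)\<close> that conditional
  typicality given \<open>(x\<^sub>1, x\<^sub>2)\<close> prescribes.\<close>

definition count_gap ::
  "('a \<Rightarrow> 'b \<Rightarrow> 'c \<Rightarrow> real) \<Rightarrow> nat \<Rightarrow> 'a list \<Rightarrow> 'b list \<Rightarrow> 'a list \<Rightarrow> 'b list \<Rightarrow> 'a \<Rightarrow> 'b \<Rightarrow> 'c \<Rightarrow> real"
where
  "count_gap W n x1 x2 x1' x2' a b c =
     (\<Sum>i\<in>pair_positions n x1 x2 a b. W (x1' ! i) (x2' ! i) c)
     - real (card (pair_positions n x1 x2 a b)) * W a b c"

lemma prob_cond_typical_le_of_gap: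
  fixes W :: "'a::finite \<Rightarrow> 'b::finite \<Rightarrow> 'c::finite \<Rightarrow> real"
  assumes W: "is_mac W" and eps: "0 \<le> eps" "eps \<le> 1"
    and gap: "4 * eps * n \<le> \<bar>count_gap W n x1 x2 x1' x2' a b c\<bar>"
  shows "prob_out n W x1' x2' (cond_typical n W eps x1 x2) \<le> 2 * exp (- real n * eps\<^sup>2)"
proof -
  let ?I = "pair_positions n x1 x2 a b"
  let ?E = "\<Sum>i\<in>?I. W (x1' ! i) (x2' ! i) c"
  let ?Q = "\<lambda>i. W (x1' ! i) (x2' ! i)"
  have typical_deviates: "2 * eps * n \<le> \<bar>?E - card {i\<in>?I. ys ! i = c}\<bar>"
    if "ys \<in> cond_typical n W eps x1 x2" for ys
  proof -
    have "{i. i < n \<and> x1 ! i = a \<and> x2 ! i = b \<and> ys ! i = c} = {i\<in>?I. ys ! i = c}"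
      by (auto simp: pair_positions_def)
    then have "\<bar>card {i\<in>?I. ys ! i = c} - card ?I * W a b c\<bar> \<le> eps * n"
      using that unfolding cond_typical_def pair_positions_def by auto
    then show ?thesis using gap by (simp add: count_gap_def)
  qed
  have "prob_out n W x1' x2' (cond_typical n W eps x1 x2)
      \<le> (\<Sum>ys | length ys = n \<and> (2 * eps) * n \<le> \<bar>?E - card {i\<in>?I. ys ! i = c}\<bar>.
            \<Prod>i<n. ?Q i (ys ! i))"
    unfolding prob_out_eq_sum using W typical_deviates
    by (intro sum_mono2 finite_subset[OF _ finite_list_length[of n]] prod_nonneg)
      (auto simp: is_mac_def)
  also have "\<dots> \<le> 2 * exp (- real n * (2 * eps)\<^sup>2 / 4)"
    using eps by (intro count_deviation_le_exp is_distr_mac[OF W]) (auto simp: pair_positions_def)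
  finally show ?thesis by (simp add: power_mult_distrib)
qed

section \<open>Pigeonhole and empirical distributions\<close>

lemma exists_ge_average:
  fixes f :: "'q::finite \<Rightarrow> real"
  shows "\<exists>q. (\<Sum>p\<in>UNIV. f p) \<le> real (card (UNIV :: 'q set)) * f q"
proof -
  have "Max (range f) \<in> range f" by (rule Max_in) auto
  then obtain q where q: "f q = Max (range f)" by (metis imageE)
  have "(\<Sum>p\<in>UNIV. f p) \<le> of_nat (card (UNIV :: 'q set)) * f q"
    by (rule sum_bounded_above) (simp add: q)
  then show ?thesis by auto
qed

lemma sum_card_fibres:
  fixes f :: "nat \<Rightarrow> 'q::finite"
  assumes "finite S"
  shows "(\<Sum>q\<in>UNIV. card {i\<in>S. f i = q}) = card S"
  using sum.group[OF assms finite_UNIV, of f "\<lambda>_. 1 :: nat"] by simp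

lemma exists_frequent_label:
  fixes f :: "nat \<Rightarrow> 'q::finite"
  assumes "finite S"
  shows "\<exists>q. real (card S) \<le> real (card (UNIV :: 'q set)) * real (card {i\<in>S. f i = q})"
proof -
  have "(\<Sum>q\<in>UNIV. real (card {i\<in>S. f i = q})) = real (card S)"
    by (simp only: of_nat_sum[symmetric] sum_card_fibres[OF assms])
  then show ?thesis using exists_ge_average[of "\<lambda>q. real (card {i\<in>S. f i = q})"] by simp
qed

definition empirical :: "nat set \<Rightarrow> (nat \<Rightarrow> 'q) \<Rightarrow> 'q \<Rightarrow> real" where
  "empirical S f q = real (card {i\<in>S. f i = q}) / real (card S)"

lemma is_distr_empirical:
  fixes f :: "nat \<Rightarrow> 'q::finite"
  assumes "finite S" "S \<noteq> {}"
  shows "is_distr (empirical S f)"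
proof -
  have "(\<Sum>q\<in>UNIV. real (card {i\<in>S. f i = q})) = real (card S)"
    by (simp only: of_nat_sum[symmetric] sum_card_fibres[OF assms(1)])
  then show ?thesis
    using assms by (simp add: is_distr_def empirical_def flip: sum_divide_distrib)
qed

lemma sum_eq_card_mult_empirical:
  fixes f :: "nat \<Rightarrow> 'q::finite" and h :: "'q \<Rightarrow> real"
  assumes "finite S"
  shows "(\<Sum>i\<in>S. h (f i)) = card S * (\<Sum>q\<in>UNIV. empirical S f q * h q)"
proof (cases "S = {}")
  case False
  have "(\<Sum>i\<in>S. h (f i)) = (\<Sum>q\<in>UNIV. \<Sum>i | i \<in> S \<and> f i = q. h (f i))"
    using sum.group[OF assms finite_UNIV, of f "\<lambda>i. h (f i)"] by simp
  also have "\<dots> = (\<Sum>q\<in>UNIV. card {i\<in>S. f i = q} * h q)" by simp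
  finally show ?thesis
    using False assms by (simp add: empirical_def sum_distrib_left)
qed simp

lemma sum_deviation_eq_empirical:
  fixes f :: "nat \<Rightarrow> 'q::finite" and h :: "'q \<Rightarrow> real" and q\<^sub>0 :: 'q
  assumes "finite I"
  defines "S \<equiv> {i\<in>I. f i \<noteq> q\<^sub>0}"
  shows "(\<Sum>i\<in>I. h (f i)) - card I * h q\<^sub>0 = card S * ((\<Sum>q\<in>UNIV. empirical S f q * h q) - h q\<^sub>0)"
proof -
  have "(\<Sum>i\<in>I. h (f i)) - card I * h q\<^sub>0 = (\<Sum>i\<in>I. h (f i) - h q\<^sub>0)"
    by (simp add: sum_subtractf)
  also have "\<dots> = (\<Sum>i\<in>S. h (f i) - h q\<^sub>0)"
    unfolding S_def using assms by (intro sum.mono_neutral_right) auto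
  also have "\<dots> = card S * ((\<Sum>q\<in>UNIV. empirical S f q * h q) - h q\<^sub>0)"
    using assms by (simp add: S_def sum_subtractf sum_eq_card_mult_empirical right_diff_distrib)
  finally show ?thesis .
qed

section \<open>A symbol whose expected count separates the inputs\<close>

lemma stat_dist_le_one:
  assumes P: "is_distr P" and Q: "is_distr Q"
  shows "stat_dist P Q \<le> 1"
proof -
  have "(\<Sum>y\<in>UNIV. \<bar>P y - Q y\<bar>) \<le> (\<Sum>y\<in>UNIV. P y + Q y)"
    using P Q by (intro sum_mono) (auto simp: is_distr_def abs_le_iff)
  also have "\<dots> = 2" using P Q by (simp add: is_distr_def sum.distrib)
  finally show ?thesis by (simp add: stat_dist_def)
qed

lemma exists_ge_stat_dist:
  fixes P Q :: "'c::finite \<Rightarrow> real"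
  shows "\<exists>y. 2 * stat_dist P Q \<le> real (card (UNIV :: 'c set)) * \<bar>P y - Q y\<bar>"
  using exists_ge_average[of "\<lambda>y. \<bar>P y - Q y\<bar>"] by (simp add: stat_dist_def)

lemma is_distr_mixture:
  fixes W :: "'a::finite \<Rightarrow> 'b::finite \<Rightarrow> 'c::finite \<Rightarrow> real"
  assumes W: "is_mac W" and P: "is_distr P"
  shows "is_distr (\<lambda>y. \<Sum>p\<in>UNIV. P p * W (fst p) (snd p) y)"
proof -
  have "(\<Sum>y\<in>UNIV. \<Sum>p\<in>UNIV. P p * W (fst p) (snd p) y) = (\<Sum>p\<in>UNIV. P p * (\<Sum>y\<in>UNIV. W (fst p) (snd p) y))"
    by (subst sum.swap) (simp add: sum_distrib_left)
  then show ?thesis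
    using W P by (auto simp: is_distr_def is_mac_def intro!: sum_nonneg)
qed

lemma separation_le_one:
  fixes W :: "'a::finite \<Rightarrow> 'b::finite \<Rightarrow> 'c::finite \<Rightarrow> real" and a :: 'a and b :: 'b
  assumes W: "is_mac W"
    and sep: "\<And>a b P. is_distr P \<Longrightarrow> P (a, b) = 0 \<Longrightarrow>
       stat_dist (W a b) (\<lambda>y. \<Sum>p\<in>UNIV. P p * W (fst p) (snd p) y) \<ge> \<eta>"
    and "(a, b) \<noteq> q"
  shows "\<eta> \<le> 1"
proof -
  let ?P = "\<lambda>p. of_bool (p = q) :: real"
  have "is_distr ?P" by (simp add: is_distr_def)
  then have "\<eta> \<le> stat_dist (W a b) (\<lambda>y. \<Sum>p\<in>UNIV. ?P p * W (fst p) (snd p) y)"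
    by (rule sep) (use \<open>(a, b) \<noteq> q\<close> in simp)
  also have "\<dots> \<le> 1"
    by (intro stat_dist_le_one is_distr_mac is_distr_mixture W \<open>is_distr ?P\<close>)
  finally show ?thesis .
qed

lemma hamming_le_length: "hamming xs ys \<le> length xs"
  unfolding hamming_def
  using card_mono[of "{..<length xs}" "{i. i < length xs \<and> xs ! i \<noteq> ys ! i}"] by auto

lemma distance_and_separation_le_one:
  fixes W :: "'a::finite \<Rightarrow> 'b::finite \<Rightarrow> 'c::finite \<Rightarrow> real"
    and x1 x1' :: "'a list" and x2 x2' :: "'b list"
  assumes W: "is_mac W" and len: "length x1 = n" and n: "0 < n" and \<delta>: "0 < \<delta>"
    and d1: "\<delta> * real n \<le> real (hamming x1 x1')"
    and sep: "\<And>a b P. is_distr P \<Longrightarrow> P (a, b) = 0 \<Longrightarrow>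
       stat_dist (W a b) (\<lambda>y. \<Sum>p\<in>UNIV. P p * W (fst p) (snd p) y) \<ge> \<eta>"
  shows "\<delta> \<le> 1" "\<eta> \<le> 1"
proof -
  have "\<delta> * n \<le> 1 * n" using d1 hamming_le_length[of x1 x1'] len by (simp add: order.trans)
  then show "\<delta> \<le> 1" using n by simp
  have "0 < \<delta> * n" using \<delta> n by simp
  then have "0 < hamming x1 x1'" using d1 by linarith
  then obtain i where "x1 ! i \<noteq> x1' ! i" unfolding hamming_def by (auto simp: card_gt_0_iff)
  then show "\<eta> \<le> 1" by (intro separation_le_one[OF W sep, of "x1 ! i" "x2 ! i" "(x1' ! i, x2' ! i)"]) auto
qed

lemma exists_frequent_mismatch:
  fixes x1 x1' :: "'a::finite list" and x2 x2' :: "'b::finite list"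
  assumes "length x1 = n"
  shows "\<exists>a b. real (hamming x1 x1')
           \<le> real (card (UNIV :: 'a set)) * real (card (UNIV :: 'b set))
             * real (card {i \<in> pair_positions n x1 x2 a b. (x1' ! i, x2' ! i) \<noteq> (a, b)})"
proof -
  define mismatches where "mismatches = {i. i < n \<and> (x1 ! i, x2 ! i) \<noteq> (x1' ! i, x2' ! i)}"
  have "hamming x1 x1' \<le> card mismatches"
    unfolding hamming_def mismatches_def using assms by (intro card_mono) auto
  moreover obtain a b where "real (card mismatches)
      \<le> real (card (UNIV :: ('a \<times> 'b) set)) * real (card {i\<in>mismatches. (x1 ! i, x2 ! i) = (a, b)})"
    using exists_frequent_label[of mismatches "\<lambda>i. (x1 ! i, x2 ! i)"]
    unfolding mismatches_def by auto
  moreover have "{i\<in>mismatches. (x1 ! i, x2 ! i) = (a, b)}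
      = {i \<in> pair_positions n x1 x2 a b. (x1' ! i, x2' ! i) \<noteq> (a, b)}"
    by (auto simp: mismatches_def pair_positions_def)
  moreover have "card (UNIV :: ('a \<times> 'b) set) = card (UNIV :: 'a set) * card (UNIV :: 'b set)"
    by (simp add: card_cartesian_product flip: UNIV_Times_UNIV)
  ultimately show ?thesis by (metis (no_types, lifting) of_nat_le_iff of_nat_mult order.trans)
qed

lemma exists_large_count_gap:
  fixes W :: "'a::finite \<Rightarrow> 'b::finite \<Rightarrow> 'c::finite \<Rightarrow> real"
    and x1 x1' :: "'a list" and x2 x2' :: "'b list" and \<eta> :: real
  assumes W: "is_mac W" and \<eta>: "0 \<le> \<eta>" and len: "length x1 = n"
    and sep: "\<And>a b P. is_distr P \<Longrightarrow> P (a, b) = 0 \<Longrightarrow>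
       stat_dist (W a b) (\<lambda>y. \<Sum>p\<in>UNIV. P p * W (fst p) (snd p) y) \<ge> \<eta>"
  shows "\<exists>a b c. 2 * \<eta> * hamming x1 x1'
           \<le> real (card (UNIV :: 'a set)) * real (card (UNIV :: 'b set)) * real (card (UNIV :: 'c set))
             * \<bar>count_gap W n x1 x2 x1' x2' a b c\<bar>"
proof -
  let ?A = "real (card (UNIV :: 'a set))" and ?B = "real (card (UNIV :: 'b set))"
    and ?C = "real (card (UNIV :: 'c set))"
  let ?f = "\<lambda>i. (x1' ! i, x2' ! i)"
  obtain a b where "real (hamming x1 x1')
      \<le> ?A * ?B * real (card {i \<in> pair_positions n x1 x2 a b. ?f i \<noteq> (a, b)})"
    using exists_frequent_mismatch[OF len] by blast
  define I where "I = pair_positions n x1 x2 a b"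
  define S where "S = {i\<in>I. ?f i \<noteq> (a, b)}"
  have fin: "finite I" "finite S" by (auto simp: I_def S_def pair_positions_def)
  have ab: "real (hamming x1 x1') \<le> ?A * ?B * card S"
    unfolding S_def I_def by fact
  show ?thesis
  proof (cases "S = {}")
    case True
    then have "hamming x1 x1' = 0" using ab by simp
    then show ?thesis by auto
  next
    case False
    define P where "P = empirical S ?f"
    define mix where "mix y = (\<Sum>p\<in>UNIV. P p * W (fst p) (snd p) y)" for y
    have "is_distr P" unfolding P_def using fin False by (intro is_distr_empirical) auto
    moreover have "{i\<in>S. ?f i = (a, b)} = {}" by (auto simp: S_def)
    then have "P (a, b) = 0" unfolding P_def empirical_def by (simp only: card.empty of_nat_0 div_0)
    ultimately have "\<eta> \<le> stat_dist (W a b) mix" unfolding mix_def by (rule sep)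
    moreover obtain c where "2 * stat_dist (W a b) mix \<le> ?C * \<bar>W a b c - mix c\<bar>"
      using exists_ge_stat_dist by blast
    ultimately have c: "2 * \<eta> \<le> ?C * \<bar>W a b c - mix c\<bar>" by linarith
    have gap: "(\<Sum>i\<in>I. W (x1' ! i) (x2' ! i) c) - card I * W a b c = card S * (mix c - W a b c)"
      using sum_deviation_eq_empirical[OF fin(1), of "\<lambda>q. W (fst q) (snd q) c" ?f "(a, b)"]
      by (simp add: S_def P_def mix_def)
    have "2 * \<eta> * hamming x1 x1' \<le> (?A * ?B * card S) * (?C * \<bar>W a b c - mix c\<bar>)"
      using mult_mono[OF c ab] \<eta> by (simp add: mult.commute)
    also have "\<dots> = ?A * ?B * ?C * \<bar>(\<Sum>i\<in>I. W (x1' ! i) (x2' ! i) c) - card I * W a b c\<bar>"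
      by (simp add: gap abs_mult abs_minus_commute)
    finally show ?thesis unfolding I_def count_gap_def by blast
  qed
qed

lemma typicality_radius_bounds:
  fixes \<delta> \<eta> A B C :: real
  assumes \<delta>: "0 < \<delta>" "\<delta> \<le> 1" and \<eta>: "0 < \<eta>" "\<eta> \<le> 1"
    and ABC: "1 \<le> A" "1 \<le> B" "1 \<le> C"
  defines "eps \<equiv> \<delta>^4 * \<eta>^2 / (2 * A^2 * B^2 * C)"
  shows "0 \<le> eps" "eps \<le> 1" "4 * eps * (A * B * C) \<le> 2 * \<delta> * \<eta>"
proof -
  have "\<delta>^3 * \<eta> \<le> 1 * 1" using \<delta> \<eta> by (intro mult_mono power_le_one) auto
  also have "\<dots> \<le> A * B" using ABC by (intro mult_mono) auto
  finally have small: "\<delta>^3 * \<eta> \<le> A * B" .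
  have "4 * eps * (A * B * C) = 2 * \<delta> * \<eta> * (\<delta>^3 * \<eta> / (A * B))"
    using ABC by (simp add: eps_def field_simps power2_eq_square power3_eq_cube power4_eq_xxxx)
  also have "\<dots> \<le> 2 * \<delta> * \<eta>"
    using small ABC \<delta> \<eta> by (intro mult_left_le) (auto simp: divide_le_eq)
  finally show "4 * eps * (A * B * C) \<le> 2 * \<delta> * \<eta>" .
  show "0 \<le> eps" using \<delta> \<eta> ABC by (simp add: eps_def)
  have "\<delta>^4 * \<eta>^2 \<le> 1 * 1" using \<delta> \<eta> by (intro mult_mono power_le_one) auto
  also have "\<dots> \<le> 2 * A^2 * B^2 * C"
  proof -
    have "1 * 1 * 1 \<le> A^2 * B^2 * C" using ABC by (intro mult_mono one_le_power) auto
    then show ?thesis by simp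
  qed
  finally show "eps \<le> 1" using ABC by (simp add: eps_def divide_le_eq)
qed

theorem lemma6:
  fixes W :: "'a::finite \<Rightarrow> 'b::finite \<Rightarrow> 'c::finite \<Rightarrow> real"
    and \<delta> \<eta> :: real and n :: nat
    and x1 x1' :: "'a list" and x2 x2' :: "'b list"
  assumes W: "is_mac W"
    and \<delta>: "\<delta> > 0" and \<eta>: "\<eta> > 0"
    and len: "length x1 = n" "length x2 = n" "length x1' = n" "length x2' = n"
    and d1: "real (hamming x1 x1') \<ge> \<delta> * real n"
    and d2: "real (hamming x2 x2') \<ge> \<delta> * real n"
    and sep: "\<And>a b P. is_distr P \<Longrightarrow> P (a, b) = 0 \<Longrightarrow>
       stat_dist (W a b) (\<lambda>y. \<Sum>p\<in>UNIV. P p * W (fst p) (snd p) y) \<ge> \<eta>"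
  shows "prob_out n W x1' x2'
           (cond_typical n W (\<delta>^4 * \<eta>^2 / (2 * real (card (UNIV :: 'a set))^2 * real (card (UNIV :: 'b set))^2 * real (card (UNIV :: 'c set)))) x1 x2)
         \<le> 2 * exp (- real n * (\<delta>^4 * \<eta>^2 / (2 * real (card (UNIV :: 'a set))^2 * real (card (UNIV :: 'b set))^2 * real (card (UNIV :: 'c set))))^4 / 2)"
proof (cases "n = 0")
  case True
  have "prob_out n W x1' x2' T \<le> 2" for T by (rule order.trans[OF prob_out_le_one[OF W]]) simp
  then show ?thesis using True by simp
next
  case False
  let ?A = "real (card (UNIV :: 'a set))" and ?B = "real (card (UNIV :: 'b set))"
    and ?C = "real (card (UNIV :: 'c set))"
  define eps where "eps = \<delta>^4 * \<eta>^2 / (2 * ?A^2 * ?B^2 * ?C)"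
  have ABC: "1 \<le> ?A" "1 \<le> ?B" "1 \<le> ?C" by (simp_all add: Suc_le_eq finite_UNIV_card_ge_0)
  have "0 < n" using False by simp
  note le_one = distance_and_separation_le_one[OF W len(1) this \<delta> d1 sep]
  obtain a b c where gap: "2 * \<eta> * hamming x1 x1' \<le> ?A * ?B * ?C * \<bar>count_gap W n x1 x2 x1' x2' a b c\<bar>"
    using exists_large_count_gap[OF W less_imp_le[OF \<eta>] len(1) sep] by blast
  note eps = typicality_radius_bounds[OF \<delta> le_one(1) \<eta> le_one(2) ABC, folded eps_def]
  have "?A * ?B * ?C * (4 * eps * n) \<le> 2 * \<eta> * (\<delta> * n)"
    using mult_right_mono[OF eps(3) of_nat_0_le_iff[of n]] by (simp only: mult_ac)
  also have "\<dots> \<le> 2 * \<eta> * hamming x1 x1'" using d1 \<eta> by (intro mult_left_mono) auto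
  also note gap
  finally have "4 * eps * n \<le> \<bar>count_gap W n x1 x2 x1' x2' a b c\<bar>"
    by (rule mult_left_le_imp_le) (use ABC in simp)
  then have "prob_out n W x1' x2' (cond_typical n W eps x1 x2) \<le> 2 * exp (- real n * eps\<^sup>2)"
    using eps by (intro prob_cond_typical_le_of_gap W)
  also have "\<dots> \<le> 2 * exp (- real n * eps ^ 4 / 2)"
    using exp_neg_square_le_exp_neg_pow4[OF of_nat_0_le_iff eps(1,2), of n] by (simp only: mult_left_mono zero_le_numeral)
  finally show ?thesis unfolding eps_def .
qed

end
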